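(* Let $G_m$ be a parametric regulatory network, $R$ a well-formed set of influence constraints, $v\in V$ and $P\in\mathbb P(G_m)$. Then $P\in\mathcal P_{(u,v,s)}$ for every $(u,v,s)\in R$ with $s\in\{-1,+1\}$ if and only if for all $\omega,\omega'\in\Omega_v$, $\omega\preceq_v\omega'$ implies $P_{v,\omega}\le P_{v,\omega'}$.
   Context: An influence graph is $G=(V,I)$, $V=\{1,\dots,n\}$, $I\subseteq V\times V$; regulators $n^-(v)=\{u\mid(u,v)\in I\}$. $m\in\mathbb N^n$, $D_v=\{0,\dots,m_v\}$, PRN $G_m=(G,m)$. Regulator states $\Omega_v=\prod_{u\in n^-(v)}D_u$; $\omega[u\leftarrow k]$ replaces component $u$ of $\omega$ by $k$. Parametrisations: vectors $P\in\mathbb P(G_m)$ with coordinates $P_{v,\omega}\in D_v$ for each $v\in V$, $\omega\in\Omega_v$. $R\subseteq V\times V\times\{+1,-1,\mathrm o\}$ is well-formed if $u\in n^-(v)$ for all $(u,v,c)\in R$ and never both $(u,v,+1),(u,v,-1)\in R$. $\mathcal P_{(u,v,+1)}=\{P\mid\forall\omega\in\Omega_v\forall x_u\in\{1..m_u\}:P_{v,\omega[u\leftarrow x_u]}\ge P_{v,\omega[u\leftarrow x_u-1]}\}$ and $\mathcal P_{(u,v,-1)}$ likewise with $\le$. The monotonicity order $\preceq_v$ on $\Omega_v$: $\omega\preceq_v\omega'$ iff for all $u\in n^-(v)$, $\omega_u\le\omega'_u$ if $(u,v,+1)\in R$, $\omega_u\ge\omega'_u$ if $(u,v,-1)\in R$,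 and $\omega_u=\omega'_u$ otherwise. *)

theory Defs
  imports Main "HOL-Library.FuncSet"
begin

(* Influence graph G = (V, I) with V = {1..n}; PRN G_m = (G, m). *)
definition influence_graph :: "nat \<Rightarrow> (nat \<times> nat) set \<Rightarrow> bool" where
  "influence_graph n I \<longleftrightarrow> I \<subseteq> {1..n} \<times> {1..n}"

definition regs :: "(nat \<times> nat) set \<Rightarrow> nat \<Rightarrow> nat set" where
  "regs I v = {u. (u, v) \<in> I}"

definition Omega :: "(nat \<times> nat) set \<Rightarrow> (nat \<Rightarrow> nat) \<Rightarrow> nat \<Rightarrow> (nat \<Rightarrow> nat) set" where
  "Omega I m v = (\<Pi>\<^sub>E u\<in>regs I v. {0..m u})"

definition parametrisations ::
  "nat \<Rightarrow> (nat \<times> nat) set \<Rightarrow> (nat \<Rightarrow> nat) \<Rightarrow> (nat \<Rightarrow> (nat \<Rightarrow> nat) \<Rightarrow> nat) set" where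
  "parametrisations n I m = {P. \<forall>v\<in>{1..n}. \<forall>\<omega>\<in>Omega I m v. P v \<omega> \<le> m v}"

datatype sgn = Plus | Minus | Obs

definition well_formed :: "(nat \<times> nat) set \<Rightarrow> (nat \<times> nat \<times> sgn) set \<Rightarrow> bool" where
  "well_formed I R \<longleftrightarrow> (\<forall>(u, v, c)\<in>R. u \<in> regs I v) \<and>
     (\<forall>u v. \<not> ((u, v, Plus) \<in> R \<and> (u, v, Minus) \<in> R))"

(* \<P>_{(u,v,s)} for s \<in> {+1,-1} (restricted to parametrisations by the caller) *)
definition constr_set ::
  "(nat \<times> nat) set \<Rightarrow> (nat \<Rightarrow> nat) \<Rightarrow> nat \<times> nat \<times> sgn \<Rightarrow> (nat \<Rightarrow> (nat \<Rightarrow> nat) \<Rightarrow> nat) set" where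
  "constr_set I m r = (case r of
     (u, v, Plus) \<Rightarrow> {P. \<forall>\<omega>\<in>Omega I m v. \<forall>x\<in>{1..m u}. P v (\<omega>(u := x)) \<ge> P v (\<omega>(u := x - 1))}
   | (u, v, Minus) \<Rightarrow> {P. \<forall>\<omega>\<in>Omega I m v. \<forall>x\<in>{1..m u}. P v (\<omega>(u := x)) \<le> P v (\<omega>(u := x - 1))}
   | (u, v, Obs) \<Rightarrow> UNIV)"

definition mono_le ::
  "(nat \<times> nat) set \<Rightarrow> (nat \<times> nat \<times> sgn) set \<Rightarrow> nat \<Rightarrow> (nat \<Rightarrow> nat) \<Rightarrow> (nat \<Rightarrow> nat) \<Rightarrow> bool" where
  "mono_le I R v \<omega> \<omega>' \<longleftrightarrow> (\<forall>u\<in>regs I v.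
     (if (u, v, Plus) \<in> R then \<omega> u \<le> \<omega>' u
      else if (u, v, Minus) \<in> R then \<omega> u \<ge> \<omega>' u
      else \<omega> u = \<omega>' u))"

end

theory Submission
  imports Defs
begin

text \<open>
  Constraints to monotonicity: if \<omega> \<preceq> \<omega>' and \<omega> \<noteq> \<omega>', move one coordinate u with
  \<omega> u \<noteq> \<omega>' u by one unit towards \<omega>' u. The sign of the edge (u, v) forces the direction of
  this move, so the corresponding constraint says that P does not decrease, the new state is
  still \<preceq> \<omega>', and it is strictly closer to \<omega>' in the L1 distance; induct on that distance.
  Monotonicity to constraints: each constraint compares two states that differ by one unit in a
  single signed regulator, and these are \<preceq>-comparable (well-formedness excludes the other sign).
\<close>

definition regulator_distance ::
  "(nat \<times> nat) set \<Rightarrow> nat \<Rightarrow> (nat \<Rightarrow> nat) \<Rightarrow> (nat \<Rightarrow> nat) \<Rightarrow> nat" where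
  "regulator_distance I v \<omega> \<omega>' = (\<Sum>u\<in>regs I v. (\<omega> u - \<omega>' u) + (\<omega>' u - \<omega> u))"

lemma finite_regs: "influence_graph n I \<Longrightarrow> finite (regs I v)"
  unfolding influence_graph_def regs_def
  by (rule finite_subset[of _ "{1..n}"]) auto

lemma Omega_fun_upd:
  "\<omega> \<in> Omega I m v \<Longrightarrow> u \<in> regs I v \<Longrightarrow> y \<le> m u \<Longrightarrow> \<omega>(u := y) \<in> Omega I m v"
  unfolding Omega_def by (auto simp: PiE_iff extensional_def)

lemma Omega_eqI:
  "\<omega> \<in> Omega I m v \<Longrightarrow> \<omega>' \<in> Omega I m v \<Longrightarrow> (\<And>u. u \<in> regs I v \<Longrightarrow> \<omega> u = \<omega>' u) \<Longrightarrow> \<omega> = \<omega>'"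
  unfolding Omega_def by (rule PiE_ext)

lemma Omega_le_bound: "\<omega> \<in> Omega I m v \<Longrightarrow> u \<in> regs I v \<Longrightarrow> \<omega> u \<le> m u"
  unfolding Omega_def by auto

lemma regulator_distance_fun_upd_less:
  assumes "finite (regs I v)" and "u \<in> regs I v" and "\<omega> u \<noteq> \<omega>' u"
  shows "regulator_distance I v (\<omega>(u := if \<omega> u < \<omega>' u then \<omega> u + 1 else \<omega> u - 1)) \<omega>'
    < regulator_distance I v \<omega> \<omega>'"
  unfolding regulator_distance_def
  by (rule sum_strict_mono_ex1[OF assms(1)]) (use assms(2,3) in auto)

lemma constraints_step_towards:
  assumes fin: "finite (regs I v)"
    and constr: "\<forall>u s. (u, v, s) \<in> R \<and> s \<in> {Plus, Minus} \<longrightarrow> P \<in> constr_set I m (u, v, s)"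
    and \<omega>: "\<omega> \<in> Omega I m v" and \<omega>': "\<omega>' \<in> Omega I m v"
    and le: "mono_le I R v \<omega> \<omega>'" and ne: "\<omega> \<noteq> \<omega>'"
  obtains \<omega>\<^sub>1 where "\<omega>\<^sub>1 \<in> Omega I m v" "P v \<omega> \<le> P v \<omega>\<^sub>1" "mono_le I R v \<omega>\<^sub>1 \<omega>'"
    "regulator_distance I v \<omega>\<^sub>1 \<omega>' < regulator_distance I v \<omega> \<omega>'"
proof -
  obtain u where u: "u \<in> regs I v" "\<omega> u \<noteq> \<omega>' u"
    using Omega_eqI[OF \<omega> \<omega>'] ne by blast
  define \<omega>\<^sub>1 where "\<omega>\<^sub>1 = \<omega>(u := if \<omega> u < \<omega>' u then \<omega> u + 1 else \<omega> u - 1)"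
  have bounds: "\<omega> u \<le> m u" "\<omega>' u \<le> m u"
    using Omega_le_bound \<omega> \<omega>' u(1) by blast+
  have in_Omega: "\<omega>\<^sub>1 \<in> Omega I m v"
    unfolding \<omega>\<^sub>1_def by (rule Omega_fun_upd[OF \<omega> u(1)]) (use bounds u(2) in auto)
  have le\<^sub>1: "mono_le I R v \<omega>\<^sub>1 \<omega>'"
    unfolding mono_le_def
  proof
    fix w assume w: "w \<in> regs I v"
    show "if (w, v, Plus) \<in> R then \<omega>\<^sub>1 w \<le> \<omega>' w
      else if (w, v, Minus) \<in> R then \<omega>' w \<le> \<omega>\<^sub>1 w else \<omega>\<^sub>1 w = \<omega>' w"
    proof (cases "w = u")
      case True
      then show ?thesis
        using le w u(2) unfolding mono_le_def \<omega>\<^sub>1_def by force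
    next
      case False
      then show ?thesis
        using le w unfolding mono_le_def \<omega>\<^sub>1_def by simp
    qed
  qed
  have "P v \<omega> \<le> P v \<omega>\<^sub>1"
  proof (cases "(u, v, Plus) \<in> R")
    case True
    then have lt: "\<omega> u < \<omega>' u"
      using le u unfolding mono_le_def by fastforce
    have "P \<in> constr_set I m (u, v, Plus)"
      using constr True by blast
    then have "\<forall>x\<in>{1..m u}. P v (\<omega>(u := x - 1)) \<le> P v (\<omega>(u := x))"
      using \<omega> unfolding constr_set_def by simp
    then have "P v (\<omega>(u := \<omega> u + 1 - 1)) \<le> P v (\<omega>(u := \<omega> u + 1))"
      by (rule bspec) (use lt bounds in simp)
    then show ?thesis
      using lt unfolding \<omega>\<^sub>1_def by simp
  next
    case False
    then have minus: "(u, v, Minus) \<in> R" and gt: "\<omega>' u < \<omega> u"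
      using le u unfolding mono_le_def by (metis le_neq_implies_less)+
    have "P \<in> constr_set I m (u, v, Minus)"
      using constr minus by blast
    then have "\<forall>x\<in>{1..m u}. P v (\<omega>(u := x)) \<le> P v (\<omega>(u := x - 1))"
      using \<omega> unfolding constr_set_def by simp
    then have "P v (\<omega>(u := \<omega> u)) \<le> P v (\<omega>(u := \<omega> u - 1))"
      by (rule bspec) (use gt bounds in simp)
    then show ?thesis
      using gt unfolding \<omega>\<^sub>1_def by simp
  qed
  moreover have "regulator_distance I v \<omega>\<^sub>1 \<omega>' < regulator_distance I v \<omega> \<omega>'"
    unfolding \<omega>\<^sub>1_def using fin u by (rule regulator_distance_fun_upd_less)
  ultimately show ?thesis
    using that in_Omega le\<^sub>1 by blast
qed

lemma constraints_imp_monotone: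
  assumes fin: "finite (regs I v)"
    and constr: "\<forall>u s. (u, v, s) \<in> R \<and> s \<in> {Plus, Minus} \<longrightarrow> P \<in> constr_set I m (u, v, s)"
    and \<omega>': "\<omega>' \<in> Omega I m v"
  shows "\<omega> \<in> Omega I m v \<Longrightarrow> mono_le I R v \<omega> \<omega>' \<Longrightarrow> P v \<omega> \<le> P v \<omega>'"
proof (induction \<omega> rule: measure_induct_rule[where f = "\<lambda>\<omega>. regulator_distance I v \<omega> \<omega>'"])
  case (less \<omega>)
  show ?case
  proof (cases "\<omega> = \<omega>'")
    case False
    then obtain \<omega>\<^sub>1 where "\<omega>\<^sub>1 \<in> Omega I m v" "P v \<omega> \<le> P v \<omega>\<^sub>1" "mono_le I R v \<omega>\<^sub>1 \<omega>'"
      "regulator_distance I v \<omega>\<^sub>1 \<omega>' < regulator_distance I v \<omega> \<omega>'"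
      using constraints_step_towards[OF fin constr less.prems(1) \<omega>' less.prems(2)] by blast
    with less.IH show ?thesis
      using le_trans by blast
  qed simp
qed

lemma monotone_imp_constraint:
  assumes wf: "well_formed I R"
    and mono: "\<forall>\<omega>\<in>Omega I m v. \<forall>\<omega>'\<in>Omega I m v. mono_le I R v \<omega> \<omega>' \<longrightarrow> P v \<omega> \<le> P v \<omega>'"
    and r: "(u, v, s) \<in> R" "s \<in> {Plus, Minus}"
  shows "P \<in> constr_set I m (u, v, s)"
proof -
  have u: "u \<in> regs I v" and not_both: "\<not> ((u, v, Plus) \<in> R \<and> (u, v, Minus) \<in> R)"
    using wf r(1) unfolding well_formed_def by blast+
  have comparable:
    "P v (\<omega>(u := x - 1)) \<le> P v (\<omega>(u := x))"
    if "(u, v, Plus) \<in> R" "\<omega> \<in> Omega I m v" "x \<in> {1..m u}" for \<omega> x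
  proof -
    have "mono_le I R v (\<omega>(u := x - 1)) (\<omega>(u := x))"
      using that(1) unfolding mono_le_def by auto
    then show ?thesis
      using mono Omega_fun_upd[OF that(2) u] that(3) by auto
  qed
  have anti_comparable:
    "P v (\<omega>(u := x)) \<le> P v (\<omega>(u := x - 1))"
    if "(u, v, Minus) \<in> R" "\<omega> \<in> Omega I m v" "x \<in> {1..m u}" for \<omega> x
  proof -
    have "mono_le I R v (\<omega>(u := x)) (\<omega>(u := x - 1))"
      using that(1) not_both unfolding mono_le_def by auto
    then show ?thesis
      using mono Omega_fun_upd[OF that(2) u] that(3) by auto
  qed
  from r(2) show ?thesis
  proof (elim insertE emptyE)
    assume "s = Plus"
    then show ?thesis
      using r(1) comparable unfolding constr_set_def by simp
  next
    assume "s = Minus"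
    then show ?thesis
      using r(1) anti_comparable unfolding constr_set_def by simp
  qed
qed

theorem lemma1:
  fixes n :: nat and I :: "(nat \<times> nat) set" and m :: "nat \<Rightarrow> nat"
    and R :: "(nat \<times> nat \<times> sgn) set" and v :: nat
    and P :: "nat \<Rightarrow> (nat \<Rightarrow> nat) \<Rightarrow> nat"
  assumes "influence_graph n I"
    and "well_formed I R"
    and "v \<in> {1..n}"
    and "P \<in> parametrisations n I m"
  shows "(\<forall>u s. (u, v, s) \<in> R \<and> s \<in> {Plus, Minus} \<longrightarrow> P \<in> constr_set I m (u, v, s))
     \<longleftrightarrow> (\<forall>\<omega>\<in>Omega I m v. \<forall>\<omega>'\<in>Omega I m v. mono_le I R v \<omega> \<omega>' \<longrightarrow> P v \<omega> \<le> P v \<omega>')"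
  using constraints_imp_monotone[OF finite_regs[OF assms(1)]]
    monotone_imp_constraint[OF assms(2)] by blast

end
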